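(* If $\mathcal F=(A,X,f)$ and $\mathcal G=(B,X,g)$ are complete D3-directable fuzzy automata, then their direct product $\mathcal F\times\mathcal G$ is D3-directable.
   Context: A fuzzy automaton is a triple $\mathcal F=(A,X,f)$ with $A$ a finite nonempty set of states, $X$ a finite nonempty alphabet, and $f:A\times X\times A\to[0,1]$, extended to words by $f^*(a,\varepsilon,a)=1$, $f^*(a,\varepsilon,b)=0$ ($b\neq a$), $f^*(a,vx,b)=\max_{c\in A}\min\{f^*(a,v,c),f(c,x,b)\}$. Let $\mathcal F(a,w)=\{b\in A\mid f^*(a,w,b)>0\}$. $\mathcal F$ is complete if $\mathcal F(a,x)\neq\emptyset$ for all $a\in A$, $x\in X$. $\mathcal F$ is D3-directable if there are $w\in X^*$ and $c\in A$ with $c\in\mathcal F(a,w)$ for all $a\in A$. The direct product is $\mathcal F\times\mathcal G=(A\times B,X,h)$ with $h((a,b),x,(a',b'))=\min\{f(a,x,a'),g(b,x,b')\}$. *)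

theory Defs
  imports Complex_Main
begin

definition fuzzy_automaton :: "'a set \<Rightarrow> 'x set \<Rightarrow> ('a \<Rightarrow> 'x \<Rightarrow> 'a \<Rightarrow> real) \<Rightarrow> bool" where
  "fuzzy_automaton A X f \<longleftrightarrow> finite A \<and> A \<noteq> {} \<and> finite X \<and> X \<noteq> {} \<and>
     (\<forall>a\<in>A. \<forall>x\<in>X. \<forall>b\<in>A. 0 \<le> f a x b \<and> f a x b \<le> 1)"

text \<open>Auxiliary: extension evaluated on the reversed word, so that the last letter
  is the head of the list.\<close>

fun fstar_rev :: "'a set \<Rightarrow> ('a \<Rightarrow> 'x \<Rightarrow> 'a \<Rightarrow> real) \<Rightarrow> 'a \<Rightarrow> 'x list \<Rightarrow> 'a \<Rightarrow> real" where
  "fstar_rev A f a [] b = (if b = a then 1 else 0)"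
| "fstar_rev A f a (x # rv) b = Max ((\<lambda>c. min (fstar_rev A f a rv c) (f c x b)) ` A)"

definition fstar :: "'a set \<Rightarrow> ('a \<Rightarrow> 'x \<Rightarrow> 'a \<Rightarrow> real) \<Rightarrow> 'a \<Rightarrow> 'x list \<Rightarrow> 'a \<Rightarrow> real" where
  "fstar A f a w b = fstar_rev A f a (rev w) b"

definition reach :: "'a set \<Rightarrow> ('a \<Rightarrow> 'x \<Rightarrow> 'a \<Rightarrow> real) \<Rightarrow> 'a \<Rightarrow> 'x list \<Rightarrow> 'a set" where
  "reach A f a w = {b \<in> A. fstar A f a w b > 0}"

definition complete_fa :: "'a set \<Rightarrow> 'x set \<Rightarrow> ('a \<Rightarrow> 'x \<Rightarrow> 'a \<Rightarrow> real) \<Rightarrow> bool" where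
  "complete_fa A X f \<longleftrightarrow> (\<forall>a\<in>A. \<forall>x\<in>X. reach A f a [x] \<noteq> {})"

definition D3_directable :: "'a set \<Rightarrow> 'x set \<Rightarrow> ('a \<Rightarrow> 'x \<Rightarrow> 'a \<Rightarrow> real) \<Rightarrow> bool" where
  "D3_directable A X f \<longleftrightarrow> (\<exists>w\<in>lists X. \<exists>c\<in>A. \<forall>a\<in>A. c \<in> reach A f a w)"

definition prod_trans :: "('a \<Rightarrow> 'x \<Rightarrow> 'a \<Rightarrow> real) \<Rightarrow> ('b \<Rightarrow> 'x \<Rightarrow> 'b \<Rightarrow> real)
    \<Rightarrow> ('a \<times> 'b) \<Rightarrow> 'x \<Rightarrow> ('a \<times> 'b) \<Rightarrow> real" where
  "prod_trans f g p x q = min (f (fst p) x (fst q)) (g (snd p) x (snd q))"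

end

theory Submission
  imports Defs
begin

text \<open>Only the support of the fuzzy transitions matters. In a complete automaton every
  word can be read from every state, so a directing word stays directing when letters are
  appended (follow any run from the old target) or prepended (read the prefix first, then
  the directing word from wherever it leads). Hence if u directs \<open>\<F>\<close> and v directs
  \<open>\<G>\<close>, the word u v directs both, and the pair of targets is a common target of the
  product, since runs of the factors on the same word combine into a run of the product.\<close>

lemma reach_Nil: "reach A f a [] = A \<inter> {a}"
  by (auto simp: reach_def fstar_def)

lemma reach_snoc:
  assumes "finite A" "A \<noteq> {}"
  shows "reach A f a (w @ [x]) = {b \<in> A. \<exists>c \<in> reach A f a w. f c x b > 0}"
  using assms by (auto simp: reach_def fstar_def Max_gr_iff)

lemma reach_append:
  assumes "finite A" "A \<noteq> {}" "m \<in> reach A f a u"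
  shows "b \<in> reach A f m v \<Longrightarrow> b \<in> reach A f a (u @ v)"
proof (induction v arbitrary: b rule: rev_induct)
  case Nil
  then show ?case using assms(3) by (simp add: reach_Nil)
next
  case (snoc x v)
  then obtain c where "c \<in> reach A f m v" "f c x b > 0" "b \<in> A"
    using assms(1,2) by (auto simp: reach_snoc)
  then have "c \<in> reach A f a (u @ v)" "f c x b > 0" "b \<in> A"
    using snoc.IH by blast+
  then have "b \<in> reach A f a ((u @ v) @ [x])"
    unfolding reach_snoc[OF assms(1,2)] by blast
  then show ?case by simp
qed

lemma reach_nonempty:
  assumes "finite A" "A \<noteq> {}" "complete_fa A X f" "a \<in> A"
  shows "w \<in> lists X \<Longrightarrow> reach A f a w \<noteq> {}"
proof (induction w rule: rev_induct)
  case Nil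
  then show ?case using assms(4) by (simp add: reach_Nil)
next
  case (snoc x w)
  then obtain m where m: "m \<in> reach A f a w" by auto
  then have "m \<in> A" by (simp add: reach_def)
  moreover have "x \<in> X" using snoc.prems by simp
  ultimately obtain b where "b \<in> reach A f m [x]"
    using assms(3) unfolding complete_fa_def by blast
  with reach_append[OF assms(1,2) m] show ?case by blast
qed

lemma reach_prod:
  assumes "finite A" "A \<noteq> {}" "finite B" "B \<noteq> {}"
  shows "a' \<in> reach A f a w \<Longrightarrow> b' \<in> reach B g b w \<Longrightarrow>
    (a', b') \<in> reach (A \<times> B) (prod_trans f g) (a, b) w"
proof (induction w arbitrary: a' b' rule: rev_induct)
  case Nil
  then show ?case by (auto simp: reach_Nil)
next
  case (snoc x w)
  from snoc.prems obtain c d where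
    c: "c \<in> reach A f a w" "f c x a' > 0" "a' \<in> A" and
    d: "d \<in> reach B g b w" "g d x b' > 0" "b' \<in> B"
    using assms by (auto simp: reach_snoc)
  have "(c, d) \<in> reach (A \<times> B) (prod_trans f g) (a, b) w"
    using snoc.IH c(1) d(1) .
  moreover have "prod_trans f g (c, d) x (a', b') > 0"
    using c(2) d(2) by (simp add: prod_trans_def)
  ultimately show ?case
    using assms c(3) d(3) by (auto simp: reach_snoc)
qed

lemma directing_append_right:
  assumes "finite A" "A \<noteq> {}" "complete_fa A X f"
    and "c \<in> A" "\<forall>a\<in>A. c \<in> reach A f a u" "v \<in> lists X"
  shows "\<exists>c'\<in>A. \<forall>a\<in>A. c' \<in> reach A f a (u @ v)"
proof -
  obtain c' where c': "c' \<in> reach A f c v"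
    using reach_nonempty[OF assms(1-4,6)] by auto
  then have "c' \<in> A" by (simp add: reach_def)
  with c' show ?thesis
    using reach_append[OF assms(1,2)] assms(5) by blast
qed

lemma directing_append_left:
  assumes "finite A" "A \<noteq> {}" "complete_fa A X f"
    and "\<forall>a\<in>A. c \<in> reach A f a v" "u \<in> lists X" "a \<in> A"
  shows "c \<in> reach A f a (u @ v)"
proof -
  obtain m where m: "m \<in> reach A f a u"
    using reach_nonempty[OF assms(1-3,6,5)] by auto
  then have "m \<in> A" by (simp add: reach_def)
  with m show ?thesis
    using reach_append[OF assms(1,2)] assms(4) by blast
qed

theorem proposition6p10:
  fixes A :: "'a set" and B :: "'b set" and X :: "'x set"
    and f :: "'a \<Rightarrow> 'x \<Rightarrow> 'a \<Rightarrow> real" and g :: "'b \<Rightarrow> 'x \<Rightarrow> 'b \<Rightarrow> real"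
  assumes "fuzzy_automaton A X f" and "fuzzy_automaton B X g"
    and "complete_fa A X f" and "complete_fa B X g"
    and "D3_directable A X f" and "D3_directable B X g"
  shows "D3_directable (A \<times> B) X (prod_trans f g)"
proof -
  have A: "finite A" "A \<noteq> {}" and B: "finite B" "B \<noteq> {}"
    using assms(1,2) by (auto simp: fuzzy_automaton_def)
  obtain u c where u: "u \<in> lists X" "c \<in> A" "\<forall>a\<in>A. c \<in> reach A f a u"
    using assms(5) by (auto simp: D3_directable_def)
  obtain v d where v: "v \<in> lists X" "d \<in> B" "\<forall>b\<in>B. d \<in> reach B g b v"
    using assms(6) by (auto simp: D3_directable_def)
  obtain c' where c': "c' \<in> A" "\<forall>a\<in>A. c' \<in> reach A f a (u @ v)"
    using directing_append_right[OF A assms(3) u(2,3) v(1)] by blast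
  have d': "\<forall>b\<in>B. d \<in> reach B g b (u @ v)"
    using directing_append_left[OF B assms(4) v(3) u(1)] by blast
  have "\<forall>p\<in>A \<times> B. (c', d) \<in> reach (A \<times> B) (prod_trans f g) p (u @ v)"
    using reach_prod[OF A B] c'(2) d' by blast
  moreover have "u @ v \<in> lists X" "(c', d) \<in> A \<times> B"
    using u(1) v(1,2) c'(1) by auto
  ultimately show ?thesis
    unfolding D3_directable_def by blast
qed

end
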